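(* Let $w$ be an ESG world and $w_t$ the corresponding time-extended t-ESG world. Let $\alpha$ be a sentence of ESG. Then for every finite timed trace $z_t$ and the untimed trace $z=\mathrm{sym}(z_t)$: $$w,z\models_{\mathrm{ESG}}\alpha \iff w_t,z_t\models_{\text{t-ESG}}\alpha .$$
   Context: The logic t-ESG. Sorts object, action, clock, time; standard names $\mathcal N_O,\mathcal N_A,\mathcal N_C$ (countably infinite) and time names $\mathbb Q_{\ge0}$; variables of sorts object, action, clock; fluent and rigid function and predicate symbols (action- and clock-valued functions rigid); distinguished fluent predicates $\mathit{Poss}$, $\mathit{reset}$, $g$. Terms built from variables, names and function symbols; primitive terms/formulas are symbols applied to names. Situation formulas: $P(\vec t)$, $t_1=t_2$, $c\bowtie r$ ($c$ clock term), $r\bowtie r'$ ($r,r'\in\mathbb Q_{\ge0}$, $\bowtie\in\{<,\le,=,\ge,>\}$), closed under $\wedge,\neg,\forall$, $\square\alpha$, $[\delta]\alpha$, $[\![\delta]\!]\phi$, $[\![\delta]\!]^{<\infty}\phi$; trace formulas: situation formulas closed under $\wedge,\neg,\forall$, $\phi\,\mathcal U_I\,\psi$ ($I$ interval with natural/$\infty$ endpoints). Programs $\delta::=t\mid\alpha?\mid\delta_1;\delta_2\mid\delta_1|\delta_2\mid\delta_1\|\delta_2\mid\delta^*$ ($t$ action term, $\alpha$ static: no $[\cdot],[\![\cdot]\!],\square$). Timed traces $t_1p_1t_2p_2\cdots$ with non-decreasing $t_i\in\mathbb R_{\ge0}$, $p_i\in\mathcal N_A$; $\mathcal Z$ finite,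 $\mathcal T$ all; $(p_1,t_1)\cdots(p_k,t_k)$ denotes $t_1p_1\cdots t_kp_k$; $\mathrm{time}(z)$ = time of last action ($0$ for $\langle\rangle$). A t-ESG world maps (primitive term, finite trace) to a name of the right sort, (primitive formula, finite trace) to $\{0,1\}$, (clock name, finite trace) to $\mathbb R_{\ge0}$, with rigidity, unique names for actions and clocks, $w[c,\langle\rangle]=0$, $w[c,z\cdot t]=w[c,z]+t-\mathrm{time}(z)$, $w[c,z\cdot p]=0$ if $w[\mathit{reset}(c),z\cdot p]=1$ else $w[c,z]$. Denotation $|f(\vec t)|^z_w=w[f(|\vec t|^z_w),z]$. Transitions given $w$: a time step $\langle z,\delta\rangle\to\langle z\cdot t,\delta\rangle$ with $t\ge\mathrm{time}(z)$ followed by an action step $\to_s$, the least relation with $\langle z,a\rangle\to_s\langle z\cdot|a|^z_w,\top?\rangle$; $\langle z,\delta_1;\delta_2\rangle\to_s\langle zp,\gamma;\delta_2\rangle$ if $\langle z,\delta_1\rangle\to_s\langle zp,\gamma\rangle$; $\langle z,\delta_1;\delta_2\rangle\to_s\langle zp,\delta'\rangle$ if $\langle z,\delta_1\rangle$ final and $\langle z,\delta_2\rangle\to_s\langle zp,\delta'\rangle$; $|$: either branch; $\langle z,\delta^*\rangle\to_s\langle zp,\gamma;\delta^*\rangle$ if $\langle z,\delta\rangle\to_s\langle zp,\gamma\rangle$; $\|$: either component steps, other unchanged. Final: $\langle z,\alpha?\rangle$ iff $w,z\models\alpha$; $;$,$\|$ both final; $|$ one final; $\delta^*$ always. $\|\delta\|^z_w$: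 finite $z'$ with $\langle z,\delta\rangle\to^*\langle zz',\delta'\rangle$ final, and infinite traces realized by an infinite transition sequence never visiting a final configuration. Truth: $F(\vec t)$ via $w[F(\vec n),z]$; equality of denotations; $c\bowtie r$ iff $w[c,z]\bowtie r$; usual connectives; $\forall$ substitutional over names; $\square\alpha$: all finite extensions; $[\delta]\alpha$: all finite $z'\in\|\delta\|^z_w$ give $w,zz'\models\alpha$; $[\![\delta]\!]\phi$: $w,z,\tau\models\phi$ for all $\tau\in\|\delta\|^z_w$; $[\![\delta]\!]^{<\infty}$: finite ones. $w,z,\tau\models\alpha$ iff $w,z\models\alpha$ for situation formulas; $w,z,\tau\models\phi\,\mathcal U_I\,\psi$ iff $\tau=z_1\tau'$, $z_1=(p_1,t_1)\cdots(p_k,t_k)$ nonempty, $w,zz_1,\tau'\models\psi$, $\mathrm{time}(z_1)\in\mathrm{time}(z)+I$, and $w,zz_2,z_3\tau'\models\phi$ for all splits $z_1=z_2z_3$ into nonempty time–action sequences. The logic ESG. Its language: t-ESG formulas mentioning only object and action terms, no clock terms, not mentioning $g$ or $\mathit{reset}$, and using $\mathcal U_I$ only with $I=[0,\infty)$ (written $\mathcal U$). ESG traces are finite or infinite sequences $p_1p_2\cdots$ of action names. An ESG world maps (primitive object/action term, finite ESG trace) to names and (primitive formula, finite ESG trace) to $\{0,1\}$, with rigidity and unique names for actions. ESG transitions are just the action steps above (no time steps), final configurations and program traces are defined analogously, and truth $\models_{\mathrm{ESG}}$ is defined by the same clauses (without clocks), with $w,z,\tau\models\phi\,\mathcal U\,\psi$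 iff $\tau=z_1\tau'$ for nonempty $z_1$, $w,zz_1,\tau'\models\psi$ and $w,zz_2,z_3\tau'\models\phi$ for all splits $z_1=z_2z_3$ with $z_2,z_3$ nonempty. Symbolic trace: $\mathrm{sym}((p_1,t_1)\cdots(p_n,t_n))=p_1\cdots p_n$ (time points omitted). Time-extended world: for an ESG world $w$, $w_t$ is the t-ESG world with $w_t[P(\vec n),z_t]=w[P(\vec n),\mathrm{sym}(z_t)]$ for every primitive formula, $w_t[f(\vec n),z_t]=w[f(\vec n),\mathrm{sym}(z_t)]$ for every primitive term, and clock values chosen in any way satisfying the t-ESG world constraints. *)

theory Defs
  imports Complex_Main
begin

section \<open>Syntax shared by ESG and t-ESG\<close>

datatype srt = SObj | SAct | SClk

datatype nm = NObj nat | NAct nat | NClk nat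

fun nsort :: "nm \<Rightarrow> srt" where
  "nsort (NObj _) = SObj" | "nsort (NAct _) = SAct" | "nsort (NClk _) = SClk"

datatype var = V srt nat

fun vsort :: "var \<Rightarrow> srt" where "vsort (V s _) = s"

text \<open>Function symbols: index, result sort, declared-rigid flag.
  Action- and clock-valued function symbols are always rigid.\<close>
datatype fsym = FS nat srt bool

fun fres :: "fsym \<Rightarrow> srt" where "fres (FS _ s _) = s"
fun frigid :: "fsym \<Rightarrow> bool" where "frigid (FS _ s r) = (r \<or> s \<noteq> SObj)"

text \<open>Predicate symbols: the distinguished fluents Poss, reset, g, and others (index, rigid flag).\<close>
datatype psym = Poss | Reset | Gd | PS nat bool

fun prigid :: "psym \<Rightarrow> bool" where
  "prigid (PS _ r) = r" | "prigid _ = False"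

datatype trm = TV var | TN nm | TF fsym "trm list"

fun tsort :: "trm \<Rightarrow> srt" where
  "tsort (TV v) = vsort v" | "tsort (TN n) = nsort n" | "tsort (TF f _) = fres f"

datatype cmp = CLt | CLe | CEq | CGe | CGt

fun cmpr :: "cmp \<Rightarrow> 'a::linorder \<Rightarrow> 'a \<Rightarrow> bool" where
  "cmpr CLt x y = (x < y)" | "cmpr CLe x y = (x \<le> y)" | "cmpr CEq x y = (x = y)"
| "cmpr CGe x y = (x \<ge> y)" | "cmpr CGt x y = (x > y)"

text \<open>Intervals with natural / infinite endpoints:
  lower bound, lower-closed flag, upper bound (None = \<infinity>), upper-closed flag.\<close>
datatype intv = Intv nat bool "nat option" bool

fun inI :: "real \<Rightarrow> intv \<Rightarrow> bool" where
  "inI d (Intv a ac b bc) =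
     ((if ac then real a \<le> d else real a < d) \<and>
      (case b of None \<Rightarrow> True | Some u \<Rightarrow> (if bc then d \<le> real u else d < real u)))"

datatype fml =
    FPred psym "trm list"
  | FEq trm trm
  | FCmpC trm cmp rat
  | FCmpR rat cmp rat
  | FAnd fml fml
  | FNot fml
  | FAll var fml
  | FBox fml
  | FAfter prog fml
  | FEvery prog fml            \<comment> \<open>[[\<delta>]]\<phi>\<close>
  | FEveryFin prog fml         \<comment> \<open>[[\<delta>]]^{<\<infinity>}\<phi>\<close>
  | FUntil fml intv fml
and prog =
    PAct trm
  | PTest fml
  | PSeq prog prog
  | PAlt prog prog
  | PPar prog prog
  | PStar prog

definition ttrue :: fml where "ttrue = FEq (TN (NObj 0)) (TN (NObj 0))"

fun static_wf :: "fml \<Rightarrow> bool" where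
  "static_wf (FPred p ts) = True"
| "static_wf (FEq t1 t2) = True"
| "static_wf (FCmpC c op r) = (tsort c = SClk \<and> r \<ge> 0)"
| "static_wf (FCmpR r op r') = (r \<ge> 0 \<and> r' \<ge> 0)"
| "static_wf (FAnd a b) = (static_wf a \<and> static_wf b)"
| "static_wf (FNot a) = static_wf a"
| "static_wf (FAll v a) = static_wf a"
| "static_wf _ = False"

fun wfp :: "prog \<Rightarrow> bool" where
  "wfp (PAct t) = (tsort t = SAct)"
| "wfp (PTest a) = static_wf a"
| "wfp (PSeq d1 d2) = (wfp d1 \<and> wfp d2)"
| "wfp (PAlt d1 d2) = (wfp d1 \<and> wfp d2)"
| "wfp (PPar d1 d2) = (wfp d1 \<and> wfp d2)"
| "wfp (PStar d) = wfp d"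

text \<open>\<open>wfk False\<close>: situation formula; \<open>wfk True\<close>: trace formula.\<close>
fun wfk :: "bool \<Rightarrow> fml \<Rightarrow> bool" where
  "wfk b (FPred p ts) = True"
| "wfk b (FEq t1 t2) = True"
| "wfk b (FCmpC c op r) = (tsort c = SClk \<and> r \<ge> 0)"
| "wfk b (FCmpR r op r') = (r \<ge> 0 \<and> r' \<ge> 0)"
| "wfk b (FAnd x y) = (wfk b x \<and> wfk b y)"
| "wfk b (FNot x) = wfk b x"
| "wfk b (FAll v x) = wfk b x"
| "wfk b (FBox x) = wfk False x"
| "wfk b (FAfter d x) = (wfp d \<and> wfk False x)"
| "wfk b (FEvery d x) = (wfp d \<and> wfk True x)"
| "wfk b (FEveryFin d x) = (wfp d \<and> wfk True x)"
| "wfk b (FUntil x I y) = (b \<and> wfk True x \<and> wfk True y)"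

fun fvt :: "trm \<Rightarrow> var set" where
  "fvt (TV v) = {v}" | "fvt (TN n) = {}" | "fvt (TF f ts) = \<Union> (set (map fvt ts))"

fun fvf :: "fml \<Rightarrow> var set" and fvp :: "prog \<Rightarrow> var set" where
  "fvf (FPred p ts) = \<Union> (set (map fvt ts))"
| "fvf (FEq t1 t2) = fvt t1 \<union> fvt t2"
| "fvf (FCmpC c op r) = fvt c"
| "fvf (FCmpR r op r') = {}"
| "fvf (FAnd x y) = fvf x \<union> fvf y"
| "fvf (FNot x) = fvf x"
| "fvf (FAll v x) = fvf x - {v}"
| "fvf (FBox x) = fvf x"
| "fvf (FAfter d x) = fvp d \<union> fvf x"
| "fvf (FEvery d x) = fvp d \<union> fvf x"
| "fvf (FEveryFin d x) = fvp d \<union> fvf x"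
| "fvf (FUntil x I y) = fvf x \<union> fvf y"
| "fvp (PAct t) = fvt t"
| "fvp (PTest a) = fvf a"
| "fvp (PSeq d1 d2) = fvp d1 \<union> fvp d2"
| "fvp (PAlt d1 d2) = fvp d1 \<union> fvp d2"
| "fvp (PPar d1 d2) = fvp d1 \<union> fvp d2"
| "fvp (PStar d) = fvp d"

subsection \<open>The ESG sublanguage\<close>

fun trm_esg :: "trm \<Rightarrow> bool" where
  "trm_esg (TV v) = (vsort v \<noteq> SClk)"
| "trm_esg (TN n) = (nsort n \<noteq> SClk)"
| "trm_esg (TF f ts) = (fres f \<noteq> SClk \<and> list_all id (map trm_esg ts))"

definition zero_inf :: "intv \<Rightarrow> bool" where
  "zero_inf I = (\<exists>b. I = Intv 0 True None b)"

fun esgf :: "fml \<Rightarrow> bool" and esgp :: "prog \<Rightarrow> bool" where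
  "esgf (FPred p ts) = (p \<noteq> Reset \<and> p \<noteq> Gd \<and> list_all trm_esg ts)"
| "esgf (FEq t1 t2) = (trm_esg t1 \<and> trm_esg t2)"
| "esgf (FCmpC c op r) = False"
| "esgf (FCmpR r op r') = False"
| "esgf (FAnd x y) = (esgf x \<and> esgf y)"
| "esgf (FNot x) = esgf x"
| "esgf (FAll v x) = (vsort v \<noteq> SClk \<and> esgf x)"
| "esgf (FBox x) = esgf x"
| "esgf (FAfter d x) = (esgp d \<and> esgf x)"
| "esgf (FEvery d x) = (esgp d \<and> esgf x)"
| "esgf (FEveryFin d x) = (esgp d \<and> esgf x)"
| "esgf (FUntil x I y) = (zero_inf I \<and> esgf x \<and> esgf y)"
| "esgp (PAct t) = trm_esg t"
| "esgp (PTest a) = esgf a"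
| "esgp (PSeq d1 d2) = (esgp d1 \<and> esgp d2)"
| "esgp (PAlt d1 d2) = (esgp d1 \<and> esgp d2)"
| "esgp (PPar d1 d2) = (esgp d1 \<and> esgp d2)"
| "esgp (PStar d) = esgp d"

definition esg_sentence :: "fml \<Rightarrow> bool" where
  "esg_sentence \<alpha> = (wfk False \<alpha> \<and> esgf \<alpha> \<and> fvf \<alpha> = {})"

datatype 'a trc = TFin "'a list" | TInf "nat \<Rightarrow> 'a"

fun tprepend :: "'a list \<Rightarrow> 'a trc \<Rightarrow> 'a trc" where
  "tprepend z (TFin l) = TFin (z @ l)"
| "tprepend z (TInf f) = TInf (\<lambda>i. if i < length z then z ! i else f (i - length z))"

definition tsplit :: "'a trc \<Rightarrow> 'a list \<Rightarrow> 'a trc \<Rightarrow> bool" where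
  "tsplit \<tau> z1 \<tau>' = (\<tau> = tprepend z1 \<tau>')"

definition env0 :: "var \<Rightarrow> nm" where
  "env0 v = (case vsort v of SObj \<Rightarrow> NObj 0 | SAct \<Rightarrow> NAct 0 | SClk \<Rightarrow> NClk 0)"

section \<open>ESG semantics\<close>

text \<open>ESG traces: sequences of action names (action name \<open>NAct p\<close> is represented by \<open>p\<close>).\<close>
record esg_world =
  ef :: "fsym \<Rightarrow> nm list \<Rightarrow> nat list \<Rightarrow> nm"
  ep :: "psym \<Rightarrow> nm list \<Rightarrow> nat list \<Rightarrow> bool"

definition is_esg_world :: "esg_world \<Rightarrow> bool" where
  "is_esg_world w =
    ((\<forall>f ns z. nsort (ef w f ns z) = fres f) \<and>
     (\<forall>f ns z z'. frigid f \<longrightarrow> ef w f ns z = ef w f ns z') \<and>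
     (\<forall>p ns z z'. prigid p \<longrightarrow> ep w p ns z = ep w p ns z') \<and>
     (\<forall>f g ns ms z. fres f = SAct \<and> fres g = SAct \<and> ef w f ns z = ef w g ms z
          \<longrightarrow> f = g \<and> ns = ms))"

fun eeval :: "esg_world \<Rightarrow> (var \<Rightarrow> nm) \<Rightarrow> nat list \<Rightarrow> trm \<Rightarrow> nm" where
  "eeval w e z (TV v) = e v"
| "eeval w e z (TN n) = n"
| "eeval w e z (TF f ts) = ef w f (map (eeval w e z) ts) z"

fun estat :: "esg_world \<Rightarrow> (var \<Rightarrow> nm) \<Rightarrow> nat list \<Rightarrow> fml \<Rightarrow> bool" where
  "estat w e z (FPred p ts) = ep w p (map (eeval w e z) ts) z"
| "estat w e z (FEq t1 t2) = (eeval w e z t1 = eeval w e z t2)"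
| "estat w e z (FAnd a b) = (estat w e z a \<and> estat w e z b)"
| "estat w e z (FNot a) = (\<not> estat w e z a)"
| "estat w e z (FAll v a) = (\<forall>n. nsort n = vsort v \<longrightarrow> estat w (e(v := n)) z a)"
| "estat w e z _ = False"

fun efinal :: "esg_world \<Rightarrow> (var \<Rightarrow> nm) \<Rightarrow> nat list \<Rightarrow> prog \<Rightarrow> bool" where
  "efinal w e z (PAct t) = False"
| "efinal w e z (PTest a) = estat w e z a"
| "efinal w e z (PSeq d1 d2) = (efinal w e z d1 \<and> efinal w e z d2)"
| "efinal w e z (PAlt d1 d2) = (efinal w e z d1 \<or> efinal w e z d2)"
| "efinal w e z (PPar d1 d2) = (efinal w e z d1 \<and> efinal w e z d2)"
| "efinal w e z (PStar d) = True"

text \<open>\<open>estep w e z \<delta> p \<delta>'\<close>: \<open>\<langle>z,\<delta>\<rangle> \<rightarrow> \<langle>z\<cdot>p,\<delta>'\<rangle>\<close>.\<close>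
inductive estep :: "esg_world \<Rightarrow> (var \<Rightarrow> nm) \<Rightarrow> nat list \<Rightarrow> prog \<Rightarrow> nat \<Rightarrow> prog \<Rightarrow> bool"
  for w e where
  eact: "eeval w e z a = NAct p \<Longrightarrow> estep w e z (PAct a) p (PTest ttrue)"
| eseq1: "estep w e z d1 p g \<Longrightarrow> estep w e z (PSeq d1 d2) p (PSeq g d2)"
| eseq2: "efinal w e z d1 \<Longrightarrow> estep w e z d2 p d' \<Longrightarrow> estep w e z (PSeq d1 d2) p d'"
| ealt1: "estep w e z d1 p d' \<Longrightarrow> estep w e z (PAlt d1 d2) p d'"
| ealt2: "estep w e z d2 p d' \<Longrightarrow> estep w e z (PAlt d1 d2) p d'"
| estar: "estep w e z d p g \<Longrightarrow> estep w e z (PStar d) p (PSeq g (PStar d))"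
| epar1: "estep w e z d1 p g \<Longrightarrow> estep w e z (PPar d1 d2) p (PPar g d2)"
| epar2: "estep w e z d2 p g \<Longrightarrow> estep w e z (PPar d1 d2) p (PPar d1 g)"

text \<open>\<open>ereach w e z \<delta> z' \<delta>'\<close>: \<open>\<langle>z,\<delta>\<rangle> \<rightarrow>* \<langle>z z',\<delta>'\<rangle>\<close>.\<close>
inductive ereach :: "esg_world \<Rightarrow> (var \<Rightarrow> nm) \<Rightarrow> nat list \<Rightarrow> prog \<Rightarrow> nat list \<Rightarrow> prog \<Rightarrow> bool"
  for w e z d where
  erefl: "ereach w e z d [] d"
| estep_r: "ereach w e z d zs d1 \<Longrightarrow> estep w e (z @ zs) d1 p d2 \<Longrightarrow> ereach w e z d (zs @ [p]) d2"

definition eptr :: "esg_world \<Rightarrow> (var \<Rightarrow> nm) \<Rightarrow> nat list \<Rightarrow> prog \<Rightarrow> nat trc set" where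
  "eptr w e z d =
     {TFin zs | zs. \<exists>d'. ereach w e z d zs d' \<and> efinal w e (z @ zs) d'} \<union>
     {TInf f | f. \<exists>ds. ds 0 = d \<and>
        (\<forall>i. estep w e (z @ map f [0..<i]) (ds i) (f i) (ds (Suc i)) \<and>
             \<not> efinal w e (z @ map f [0..<i]) (ds i))}"

definition efin :: "esg_world \<Rightarrow> (var \<Rightarrow> nm) \<Rightarrow> nat list \<Rightarrow> prog \<Rightarrow> nat list set" where
  "efin w e z d = {zs. TFin zs \<in> eptr w e z d}"

fun esat :: "esg_world \<Rightarrow> (var \<Rightarrow> nm) \<Rightarrow> nat list \<Rightarrow> nat trc \<Rightarrow> fml \<Rightarrow> bool" where
  "esat w e z \<tau> (FPred p ts) = ep w p (map (eeval w e z) ts) z"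
| "esat w e z \<tau> (FEq t1 t2) = (eeval w e z t1 = eeval w e z t2)"
| "esat w e z \<tau> (FCmpC c op r) = False"
| "esat w e z \<tau> (FCmpR r op r') = False"
| "esat w e z \<tau> (FAnd a b) = (esat w e z \<tau> a \<and> esat w e z \<tau> b)"
| "esat w e z \<tau> (FNot a) = (\<not> esat w e z \<tau> a)"
| "esat w e z \<tau> (FAll v a) = (\<forall>n. nsort n = vsort v \<longrightarrow> esat w (e(v := n)) z \<tau> a)"
| "esat w e z \<tau> (FBox a) = (\<forall>z'. esat w e (z @ z') (TFin []) a)"
| "esat w e z \<tau> (FAfter d a) = (\<forall>z' \<in> efin w e z d. esat w e (z @ z') (TFin []) a)"
| "esat w e z \<tau> (FEvery d a) = (\<forall>\<tau>' \<in> eptr w e z d. esat w e z \<tau>' a)"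
| "esat w e z \<tau> (FEveryFin d a) = (\<forall>z' \<in> efin w e z d. esat w e z (TFin z') a)"
| "esat w e z \<tau> (FUntil a I b) =
     (\<exists>z1 \<tau>'. tsplit \<tau> z1 \<tau>' \<and> z1 \<noteq> [] \<and> esat w e (z @ z1) \<tau>' b \<and>
        (\<forall>z2 z3. z1 = z2 @ z3 \<and> z2 \<noteq> [] \<and> z3 \<noteq> [] \<longrightarrow>
            esat w e (z @ z2) (tprepend z3 \<tau>') a))"

definition esg_models :: "esg_world \<Rightarrow> nat list \<Rightarrow> fml \<Rightarrow> bool" where
  "esg_models w z \<alpha> = esat w env0 z (TFin []) \<alpha>"

section \<open>t-ESG semantics\<close>

text \<open>Timed traces are lists of elements, each a time point or an action name,
  of the form \<open>t1 p1 t2 p2 \<dots>\<close> (possibly ending in a time point after a time step).\<close>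
datatype tel = Tm real | Ac nat

fun alt_tr :: "tel list \<Rightarrow> bool" where
  "alt_tr [] = True"
| "alt_tr [Tm t] = True"
| "alt_tr (Tm t # Ac p # z) = alt_tr z"
| "alt_tr _ = False"

fun times :: "tel list \<Rightarrow> real list" where
  "times [] = []" | "times (Tm t # z) = t # times z" | "times (Ac p # z) = times z"

fun acts :: "tel list \<Rightarrow> nat list" where
  "acts [] = []" | "acts (Tm t # z) = acts z" | "acts (Ac p # z) = p # acts z"

definition ztr :: "tel list \<Rightarrow> bool" where
  "ztr z = (alt_tr z \<and> sorted (times z) \<and> (\<forall>t \<in> set (times z). 0 \<le> t))"

text \<open>Time--action sequences \<open>(p1,t1)\<cdots>(pk,tk) = t1 p1 \<cdots> tk pk\<close>.\<close>
definition pairseq :: "tel list \<Rightarrow> bool" where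
  "pairseq z = (alt_tr z \<and> even (length z))"

definition symtr :: "tel list \<Rightarrow> nat list" where
  "symtr z = acts z"

text \<open>\<open>time z\<close>: time of the last action in \<open>z\<close> (0 if there is none).\<close>
fun ltime :: "real \<Rightarrow> real \<Rightarrow> tel list \<Rightarrow> real" where
  "ltime r cur [] = r"
| "ltime r cur (Tm t # z) = ltime r t z"
| "ltime r cur (Ac p # z) = ltime cur cur z"

definition time :: "tel list \<Rightarrow> real" where
  "time z = ltime 0 0 z"

record tesg_world =
  tf :: "fsym \<Rightarrow> nm list \<Rightarrow> tel list \<Rightarrow> nm"
  tp :: "psym \<Rightarrow> nm list \<Rightarrow> tel list \<Rightarrow> bool"
  tc :: "nat \<Rightarrow> tel list \<Rightarrow> real"

definition is_tesg_world :: "tesg_world \<Rightarrow> bool" where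
  "is_tesg_world w =
    ((\<forall>f ns z. ztr z \<longrightarrow> nsort (tf w f ns z) = fres f) \<and>
     (\<forall>f ns z z'. frigid f \<and> ztr z \<and> ztr z' \<longrightarrow> tf w f ns z = tf w f ns z') \<and>
     (\<forall>p ns z z'. prigid p \<and> ztr z \<and> ztr z' \<longrightarrow> tp w p ns z = tp w p ns z') \<and>
     (\<forall>f g ns ms z. ztr z \<and> fres f = SAct \<and> fres g = SAct \<and> tf w f ns z = tf w g ms z
          \<longrightarrow> f = g \<and> ns = ms) \<and>
     (\<forall>f g ns ms z. ztr z \<and> fres f = SClk \<and> fres g = SClk \<and> tf w f ns z = tf w g ms z
          \<longrightarrow> f = g \<and> ns = ms) \<and>
     (\<forall>c z. ztr z \<longrightarrow> tc w c z \<ge> 0) \<and>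
     (\<forall>c. tc w c [] = 0) \<and>
     (\<forall>c z t. ztr (z @ [Tm t]) \<longrightarrow> tc w c (z @ [Tm t]) = tc w c z + t - time z) \<and>
     (\<forall>c z p. ztr (z @ [Ac p]) \<longrightarrow>
          tc w c (z @ [Ac p]) = (if tp w Reset [NClk c] (z @ [Ac p]) then 0 else tc w c z)))"

fun teval :: "tesg_world \<Rightarrow> (var \<Rightarrow> nm) \<Rightarrow> tel list \<Rightarrow> trm \<Rightarrow> nm" where
  "teval w e z (TV v) = e v"
| "teval w e z (TN n) = n"
| "teval w e z (TF f ts) = tf w f (map (teval w e z) ts) z"

fun tstat :: "tesg_world \<Rightarrow> (var \<Rightarrow> nm) \<Rightarrow> tel list \<Rightarrow> fml \<Rightarrow> bool" where
  "tstat w e z (FPred p ts) = tp w p (map (teval w e z) ts) z"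
| "tstat w e z (FEq t1 t2) = (teval w e z t1 = teval w e z t2)"
| "tstat w e z (FCmpC c op r) =
     (case teval w e z c of NClk k \<Rightarrow> cmpr op (tc w k z) (of_rat r) | _ \<Rightarrow> False)"
| "tstat w e z (FCmpR r op r') = cmpr op r r'"
| "tstat w e z (FAnd a b) = (tstat w e z a \<and> tstat w e z b)"
| "tstat w e z (FNot a) = (\<not> tstat w e z a)"
| "tstat w e z (FAll v a) = (\<forall>n. nsort n = vsort v \<longrightarrow> tstat w (e(v := n)) z a)"
| "tstat w e z _ = False"

fun tfinal :: "tesg_world \<Rightarrow> (var \<Rightarrow> nm) \<Rightarrow> tel list \<Rightarrow> prog \<Rightarrow> bool" where
  "tfinal w e z (PAct t) = False"
| "tfinal w e z (PTest a) = tstat w e z a"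
| "tfinal w e z (PSeq d1 d2) = (tfinal w e z d1 \<and> tfinal w e z d2)"
| "tfinal w e z (PAlt d1 d2) = (tfinal w e z d1 \<or> tfinal w e z d2)"
| "tfinal w e z (PPar d1 d2) = (tfinal w e z d1 \<and> tfinal w e z d2)"
| "tfinal w e z (PStar d) = True"

text \<open>Action step \<open>\<rightarrow>_s\<close>: \<open>tstep w e z \<delta> p \<delta>'\<close> means \<open>\<langle>z,\<delta>\<rangle> \<rightarrow>_s \<langle>z\<cdot>p,\<delta>'\<rangle>\<close>.\<close>
inductive tstep :: "tesg_world \<Rightarrow> (var \<Rightarrow> nm) \<Rightarrow> tel list \<Rightarrow> prog \<Rightarrow> nat \<Rightarrow> prog \<Rightarrow> bool"
  for w e where
  tact: "teval w e z a = NAct p \<Longrightarrow> tstep w e z (PAct a) p (PTest ttrue)"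
| tseq1: "tstep w e z d1 p g \<Longrightarrow> tstep w e z (PSeq d1 d2) p (PSeq g d2)"
| tseq2: "tfinal w e z d1 \<Longrightarrow> tstep w e z d2 p d' \<Longrightarrow> tstep w e z (PSeq d1 d2) p d'"
| talt1: "tstep w e z d1 p d' \<Longrightarrow> tstep w e z (PAlt d1 d2) p d'"
| talt2: "tstep w e z d2 p d' \<Longrightarrow> tstep w e z (PAlt d1 d2) p d'"
| tstar: "tstep w e z d p g \<Longrightarrow> tstep w e z (PStar d) p (PSeq g (PStar d))"
| tpar1: "tstep w e z d1 p g \<Longrightarrow> tstep w e z (PPar d1 d2) p (PPar g d2)"
| tpar2: "tstep w e z d2 p g \<Longrightarrow> tstep w e z (PPar d1 d2) p (PPar d1 g)"

text \<open>A transition: a time step \<open>\<langle>z,\<delta>\<rangle> \<rightarrow> \<langle>z\<cdot>t,\<delta>\<rangle>\<close> with \<open>t \<ge> time z\<close> followed by an action step.\<close>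
inductive treach :: "tesg_world \<Rightarrow> (var \<Rightarrow> nm) \<Rightarrow> tel list \<Rightarrow> prog \<Rightarrow> tel list \<Rightarrow> prog \<Rightarrow> bool"
  for w e z d where
  trefl: "treach w e z d [] d"
| tstep_r: "treach w e z d zs d1 \<Longrightarrow> t \<ge> time (z @ zs) \<Longrightarrow>
            tstep w e (z @ zs @ [Tm t]) d1 p d2 \<Longrightarrow> treach w e z d (zs @ [Tm t, Ac p]) d2"

definition tptr :: "tesg_world \<Rightarrow> (var \<Rightarrow> nm) \<Rightarrow> tel list \<Rightarrow> prog \<Rightarrow> tel trc set" where
  "tptr w e z d =
     {TFin zs | zs. \<exists>d'. treach w e z d zs d' \<and> tfinal w e (z @ zs) d'} \<union>
     {TInf f | f. \<exists>ds. ds 0 = d \<and>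
        (\<forall>i. \<exists>t p. f (2*i) = Tm t \<and> f (2*i+1) = Ac p \<and>
             t \<ge> time (z @ map f [0..<2*i]) \<and>
             tstep w e (z @ map f [0..<2*i] @ [Tm t]) (ds i) p (ds (Suc i)) \<and>
             \<not> tfinal w e (z @ map f [0..<2*i]) (ds i))}"

definition tfin :: "tesg_world \<Rightarrow> (var \<Rightarrow> nm) \<Rightarrow> tel list \<Rightarrow> prog \<Rightarrow> tel list set" where
  "tfin w e z d = {zs. TFin zs \<in> tptr w e z d}"

fun tsat :: "tesg_world \<Rightarrow> (var \<Rightarrow> nm) \<Rightarrow> tel list \<Rightarrow> tel trc \<Rightarrow> fml \<Rightarrow> bool" where
  "tsat w e z \<tau> (FPred p ts) = tp w p (map (teval w e z) ts) z"
| "tsat w e z \<tau> (FEq t1 t2) = (teval w e z t1 = teval w e z t2)"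
| "tsat w e z \<tau> (FCmpC c op r) =
     (case teval w e z c of NClk k \<Rightarrow> cmpr op (tc w k z) (of_rat r) | _ \<Rightarrow> False)"
| "tsat w e z \<tau> (FCmpR r op r') = cmpr op r r'"
| "tsat w e z \<tau> (FAnd a b) = (tsat w e z \<tau> a \<and> tsat w e z \<tau> b)"
| "tsat w e z \<tau> (FNot a) = (\<not> tsat w e z \<tau> a)"
| "tsat w e z \<tau> (FAll v a) = (\<forall>n. nsort n = vsort v \<longrightarrow> tsat w (e(v := n)) z \<tau> a)"
| "tsat w e z \<tau> (FBox a) = (\<forall>z'. ztr (z @ z') \<and> pairseq z' \<longrightarrow> tsat w e (z @ z') (TFin []) a)"
| "tsat w e z \<tau> (FAfter d a) = (\<forall>z' \<in> tfin w e z d. tsat w e (z @ z') (TFin []) a)"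
| "tsat w e z \<tau> (FEvery d a) = (\<forall>\<tau>' \<in> tptr w e z d. tsat w e z \<tau>' a)"
| "tsat w e z \<tau> (FEveryFin d a) = (\<forall>z' \<in> tfin w e z d. tsat w e z (TFin z') a)"
| "tsat w e z \<tau> (FUntil a I b) =
     (\<exists>z1 \<tau>'. tsplit \<tau> z1 \<tau>' \<and> pairseq z1 \<and> z1 \<noteq> [] \<and> tsat w e (z @ z1) \<tau>' b \<and>
        inI (time z1 - time z) I \<and>
        (\<forall>z2 z3. z1 = z2 @ z3 \<and> pairseq z2 \<and> z2 \<noteq> [] \<and> pairseq z3 \<and> z3 \<noteq> [] \<longrightarrow>
            tsat w e (z @ z2) (tprepend z3 \<tau>') a))"

definition tesg_models :: "tesg_world \<Rightarrow> tel list \<Rightarrow> fml \<Rightarrow> bool" where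
  "tesg_models w z \<alpha> = tsat w env0 z (TFin []) \<alpha>"

section \<open>Time-extended worlds\<close>

text \<open>\<open>wt\<close> is a time extension of \<open>w\<close>: a t-ESG world agreeing with \<open>w\<close> on all primitive
  terms and formulas of the ESG language, evaluated on the symbolic trace; clocks arbitrary
  subject to the t-ESG world constraints.\<close>
definition time_ext :: "esg_world \<Rightarrow> tesg_world \<Rightarrow> bool" where
  "time_ext w wt =
    (is_tesg_world wt \<and>
     (\<forall>f ns z. ztr z \<and> fres f \<noteq> SClk \<and> (\<forall>n \<in> set ns. nsort n \<noteq> SClk) \<longrightarrow>
         tf wt f ns z = ef w f ns (symtr z)) \<and>
     (\<forall>p ns z. ztr z \<and> p \<noteq> Reset \<and> p \<noteq> Gd \<and> (\<forall>n \<in> set ns. nsort n \<noteq> SClk) \<longrightarrow>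
         tp wt p ns z = ep w p ns (symtr z)))"

end

theory Submission
  imports Defs
begin

text \<open>
  Atoms of the ESG language are evaluated in \<open>w\<^sub>t\<close> at \<open>z\<^sub>t\<close> exactly as in \<open>w\<close> at
  \<open>sym(z\<^sub>t)\<close>, and ESG has no clock comparisons; its only interval \<open>[0,\<infinity>)\<close> holds
  automatically because time never decreases. What remains are the operators quantifying over
  traces, which range over timed traces in t-ESG and untimed ones in ESG. Here the projection
  \<open>sym\<close> maps the timed extensions of \<open>z\<^sub>t\<close>, and the timed traces of a program, onto their
  untimed counterparts: a timed run projects to an untimed run step by step, and an untimed run is
  replayed in \<open>w\<^sub>t\<close> by performing every action at time \<open>time(z\<^sub>t)\<close>. The theorem then follows
  by induction on formulas, generalised to open formulas under well-sorted environments and to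
  trace formulas evaluated on a time--action continuation \<open>\<tau>\<close> of \<open>z\<^sub>t\<close>.
\<close>

section \<open>Time--action sequences\<close>

lemma acts_append [simp]: "acts (a @ b) = acts a @ acts b"
  by (induction a rule: acts.induct) auto

lemma times_append [simp]: "times (a @ b) = times a @ times b"
  by (induction a rule: times.induct) auto

lemma pairseq_simps [simp]:
  "pairseq []"
  "pairseq (Tm t # Ac p # z) \<longleftrightarrow> pairseq z"
  "\<not> pairseq (Ac p # z)"
  "\<not> pairseq [Tm t]"
  "\<not> pairseq (Tm t # Tm s # z)"
  by (auto simp: pairseq_def)

lemma pairseq_induct [consumes 1, case_names Nil Cons]:
  assumes "pairseq z"
    and "P []"
    and "\<And>t p z. pairseq z \<Longrightarrow> P z \<Longrightarrow> P (Tm t # Ac p # z)"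
  shows "P z"
  using assms(1)
proof (induction z rule: induct_list012)
  case (3 x y z)
  then show ?case using assms(3) by (cases x; cases y) auto
qed (use assms(2) in \<open>auto simp: pairseq_def\<close>)

lemma alt_tr_append: "pairseq a \<Longrightarrow> alt_tr (a @ b) \<longleftrightarrow> alt_tr b"
  by (induction a rule: pairseq_induct) auto

lemma pairseq_append: "pairseq a \<Longrightarrow> pairseq (a @ b) \<longleftrightarrow> pairseq b"
  by (induction a rule: pairseq_induct) auto

lemma alt_tr_appendD: "alt_tr (a @ b) \<Longrightarrow> alt_tr a"
  by (induction a arbitrary: b rule: alt_tr.induct) auto

lemma ztr_appendD: "ztr (a @ b) \<Longrightarrow> ztr a"
  unfolding ztr_def using alt_tr_appendD sorted_append by fastforce

lemma acts_eq_Nil_iff: "pairseq z \<Longrightarrow> acts z = [] \<longleftrightarrow> z = []"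
  by (induction z rule: pairseq_induct) auto

lemma length_pairseq: "pairseq z \<Longrightarrow> length z = 2 * length (acts z)"
  by (induction z rule: pairseq_induct) auto

lemma nth_pairseq_odd: "pairseq z \<Longrightarrow> i < length (acts z) \<Longrightarrow> z ! (2*i+1) = Ac (acts z ! i)"
proof (induction z arbitrary: i rule: pairseq_induct)
  case (Cons t p z)
  then show ?case by (cases i) auto
qed simp

lemma pairseq_take_drop:
  "pairseq z \<Longrightarrow>
     pairseq (take (2*k) z) \<and> pairseq (drop (2*k) z) \<and> acts (take (2*k) z) = take k (acts z)"
proof (induction z arbitrary: k rule: pairseq_induct)
  case (Cons t p z)
  then show ?case by (cases k) auto
qed simp

lemma pairseq_split_acts:
  assumes "pairseq z" and "acts z = u2 @ u3"
  obtains z2 z3 where "z = z2 @ z3" "pairseq z2" "pairseq z3" "acts z2 = u2" "acts z3 = u3"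
proof
  let ?k = "length u2"
  show "z = take (2*?k) z @ drop (2*?k) z" by simp
  show "pairseq (take (2*?k) z)" "pairseq (drop (2*?k) z)" and u2: "acts (take (2*?k) z) = u2"
    using pairseq_take_drop[OF assms(1), of ?k] assms(2) by auto
  have "acts z = acts (take (2*?k) z) @ acts (drop (2*?k) z)"
    by (metis acts_append append_take_drop_id)
  then show "acts (drop (2*?k) z) = u3"
    using assms(2) u2 by simp
qed

lemma all_pairseq_split_iff:
  assumes "pairseq z"
  shows "(\<forall>u2 u3. acts z = u2 @ u3 \<and> u2 \<noteq> [] \<and> u3 \<noteq> [] \<longrightarrow> Q u2 u3) \<longleftrightarrow>
    (\<forall>z2 z3. z = z2 @ z3 \<and> pairseq z2 \<and> z2 \<noteq> [] \<and> pairseq z3 \<and> z3 \<noteq> [] \<longrightarrow> Q (acts z2) (acts z3))"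
proof (intro iffI allI impI)
  fix z2 z3
  assume "\<forall>u2 u3. acts z = u2 @ u3 \<and> u2 \<noteq> [] \<and> u3 \<noteq> [] \<longrightarrow> Q u2 u3"
    and "z = z2 @ z3 \<and> pairseq z2 \<and> z2 \<noteq> [] \<and> pairseq z3 \<and> z3 \<noteq> []"
  then show "Q (acts z2) (acts z3)"
    using acts_eq_Nil_iff by simp
next
  fix u2 u3
  assume "\<forall>z2 z3. z = z2 @ z3 \<and> pairseq z2 \<and> z2 \<noteq> [] \<and> pairseq z3 \<and> z3 \<noteq> [] \<longrightarrow>
      Q (acts z2) (acts z3)"
    and "acts z = u2 @ u3 \<and> u2 \<noteq> [] \<and> u3 \<noteq> []"
  then show "Q u2 u3"
    using pairseq_split_acts[OF assms] acts_eq_Nil_iff by metis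
qed

lemma times_eq_Nil_iff: "pairseq z \<Longrightarrow> times z = [] \<longleftrightarrow> z = []"
  by (induction z rule: pairseq_induct) auto

lemma ltime_pairseq: "pairseq z \<Longrightarrow> ltime r c z = (if z = [] then r else last (times z))"
  by (induction z arbitrary: r c rule: pairseq_induct) (auto simp: times_eq_Nil_iff)

lemma time_pairseq: "pairseq z \<Longrightarrow> time z = (if z = [] then 0 else last (times z))"
  by (simp add: time_def ltime_pairseq)

lemma time_append: "pairseq z \<Longrightarrow> pairseq z1 \<Longrightarrow> z1 \<noteq> [] \<Longrightarrow> time (z @ z1) = time z1"
  by (simp add: time_pairseq pairseq_append times_eq_Nil_iff)

lemma time_nonneg: "ztr z \<Longrightarrow> pairseq z \<Longrightarrow> 0 \<le> time z"
  by (auto simp: time_pairseq ztr_def times_eq_Nil_iff)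

lemma sorted_le_last: "sorted xs \<Longrightarrow> x \<in> set xs \<Longrightarrow> x \<le> last xs"
  by (induction xs) auto

lemma time_upper: "ztr z \<Longrightarrow> pairseq z \<Longrightarrow> t \<in> set (times z) \<Longrightarrow> t \<le> time z"
  by (auto simp: time_pairseq ztr_def sorted_le_last)

lemma time_mono:
  assumes "ztr (z @ z1)" "pairseq z" "pairseq z1" "z1 \<noteq> []"
  shows "time z \<le> time z1"
proof -
  have zz1: "pairseq (z @ z1)" and time_z1: "time (z @ z1) = time z1"
    using assms time_append pairseq_append by auto
  show ?thesis
  proof (cases "z = []")
    case True
    then show ?thesis using time_nonneg[OF assms(1) zz1] time_z1 by (simp add: time_def)
  next
    case False
    then have "time z \<in> set (times (z @ z1))"
      using assms(2) by (simp add: time_pairseq times_eq_Nil_iff)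
    then show ?thesis using time_upper[OF assms(1) zz1] time_z1 by simp
  qed
qed

lemma ztr_snoc:
  assumes "ztr z" "pairseq z" "time z \<le> t"
  shows "ztr (z @ [Tm t])" "ztr (z @ [Tm t, Ac p])"
  using assms time_upper[OF assms(1,2)] time_nonneg[OF assms(1,2)]
  by (auto simp: ztr_def alt_tr_append sorted_append intro: order_trans)

definition stamp :: "real \<Rightarrow> nat list \<Rightarrow> tel list" where
  "stamp T u = concat (map (\<lambda>p. [Tm T, Ac p]) u)"

lemma acts_stamp [simp]: "acts (stamp T u) = u"
  by (induction u) (auto simp: stamp_def)

lemma pairseq_stamp [simp]: "pairseq (stamp T u)"
  by (induction u) (auto simp: stamp_def)

lemma stamp_snoc: "stamp T (u @ [p]) = stamp T u @ [Tm T, Ac p]"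
  by (simp add: stamp_def)

lemma ztr_stamp:
  assumes "ztr z" "pairseq z"
  shows "ztr (z @ stamp (time z) u) \<and> time (z @ stamp (time z) u) = time z"
proof (induction u rule: rev_induct)
  case Nil
  then show ?case using assms by (simp add: stamp_def)
next
  case (snoc p u)
  have "pairseq (z @ stamp (time z) u)"
    using assms(2) pairseq_append by simp
  with snoc ztr_snoc(2)[of "z @ stamp (time z) u" "time z" p]
    time_append[of "z @ stamp (time z) u" "[Tm (time z), Ac p]"]
  show ?case
    by (simp add: stamp_snoc time_def)
qed

lemma map_upt_stamp:
  "map (\<lambda>n. if even n then Tm T else Ac (f (n div 2))) [0..<2*i] = stamp T (map f [0..<i])"
  by (induction i) (simp_all add: stamp_def)

section \<open>Continuations of a timed trace and their symbolic projection\<close>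

text \<open>The odd positions of an infinite timed trace hold its actions, so the junk value
  \<open>act_of (Tm t) = 0\<close> is never observed on traces of the form \<open>t\<^sub>1 p\<^sub>1 t\<^sub>2 p\<^sub>2 \<dots>\<close>.\<close>

fun act_of :: "tel \<Rightarrow> nat" where
  "act_of (Ac p) = p"
| "act_of (Tm t) = 0"

fun sym_trace :: "tel trc \<Rightarrow> nat trc" where
  "sym_trace (TFin zs) = TFin (acts zs)"
| "sym_trace (TInf g) = TInf (\<lambda>i. act_of (g (2*i+1)))"

fun admissible :: "tel list \<Rightarrow> tel trc \<Rightarrow> bool" where
  "admissible z (TFin zs) \<longleftrightarrow> ztr (z @ zs) \<and> pairseq z \<and> pairseq zs"
| "admissible z (TInf g) \<longleftrightarrow>
     pairseq z \<and> (\<forall>i. ztr (z @ map g [0..<2*i]) \<and> pairseq (map g [0..<2*i]))"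

lemma admissibleD: "admissible z \<tau> \<Longrightarrow> ztr z \<and> pairseq z"
  by (cases \<tau>) (auto dest: ztr_appendD spec[of _ 0])

lemma acts_map_upt:
  assumes "pairseq (map g [0..<2*i])"
  shows "acts (map g [0..<2*i]) = map (\<lambda>j. act_of (g (2*j+1))) [0..<i]"
proof (rule nth_equalityI)
  let ?z = "map g [0..<2*i]"
  have len: "length (acts ?z) = i"
    using length_pairseq[OF assms] by simp
  then show "length (acts ?z) = length (map (\<lambda>j. act_of (g (2*j+1))) [0..<i])"
    by simp
  fix j assume "j < length (acts ?z)"
  with nth_pairseq_odd[OF assms this] len
  show "acts ?z ! j = map (\<lambda>j. act_of (g (2*j+1))) [0..<i] ! j"
    by simp
qed

lemma tprepend_append: "tprepend (a @ b) \<tau> = tprepend a (tprepend b \<tau>)"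
  by (cases \<tau>) (auto simp: nth_append fun_eq_iff)

lemma tprepend_inj: "tprepend u \<tau> = tprepend u \<sigma> \<Longrightarrow> \<tau> = \<sigma>"
proof (cases \<tau>; cases \<sigma>)
  fix f g assume "tprepend u \<tau> = tprepend u \<sigma>" "\<tau> = TInf f" "\<sigma> = TInf g"
  then have "f i = g i" for i
    using fun_cong[of _ _ "i + length u"] by fastforce
  then show "\<tau> = \<sigma>"
    using \<open>\<tau> = TInf f\<close> \<open>\<sigma> = TInf g\<close> by auto
qed auto

lemma sym_trace_tprepend:
  assumes "pairseq z1"
  shows "sym_trace (tprepend z1 \<tau>) = tprepend (acts z1) (sym_trace \<tau>)"
proof (cases \<tau>)
  case (TInf h)
  have len: "length z1 = 2 * length (acts z1)"
    using length_pairseq[OF assms] .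
  have "act_of (if 2*i+1 < length z1 then z1 ! (2*i+1) else h (2*i+1 - length z1)) =
        (if i < length (acts z1) then acts z1 ! i else act_of (h (2 * (i - length (acts z1)) + 1)))"
    for i
  proof -
    have "\<not> i < length (acts z1) \<Longrightarrow> 2*i+1 - length z1 = 2 * (i - length (acts z1)) + 1"
      using len by simp
    then show ?thesis
      using nth_pairseq_odd[OF assms, of i] len by auto
  qed
  then show ?thesis using TInf by (simp add: fun_eq_iff)
qed simp

lemma map_upt_tprepend:
  "map (\<lambda>i. if i < length z1 then z1 ! i else h (i - length z1)) [0..<n] =
     (if n \<le> length z1 then take n z1 else z1 @ map h [0..<n - length z1])"
proof (induction n)
  case (Suc n)
  then show ?case
    by (cases "Suc n \<le> length z1") (auto simp: take_Suc_conv_app_nth Suc_diff_le)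
qed simp

lemma admissible_tprepend:
  assumes "pairseq z1"
  shows "admissible z (tprepend z1 \<tau>) \<longleftrightarrow> admissible z (TFin z1) \<and> admissible (z @ z1) \<tau>"
proof (cases \<tau>)
  case (TFin zs)
  then show ?thesis
    using ztr_appendD[of "z @ z1" zs] by (auto simp: pairseq_append assms)
next
  case (TInf h)
  define k where "k = length (acts z1)"
  define g where "g i = (if i < length z1 then z1 ! i else h (i - length z1))" for i
  have len: "length z1 = 2 * k"
    using length_pairseq[OF assms] k_def by simp
  have prefix: "map g [0..<2*i] =
      (if i \<le> k then take (2*i) z1 else z1 @ map h [0..<2 * (i - k)])" for i
    using map_upt_tprepend[of z1 h "2*i"] len unfolding g_def by (simp add: right_diff_distrib')
  have prepend: "tprepend z1 \<tau> = TInf g"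
    using TInf g_def by (simp add: fun_eq_iff)
  show ?thesis
  proof
    assume "admissible z (tprepend z1 \<tau>)"
    then have z: "pairseq z" and g: "\<And>i. ztr (z @ map g [0..<2*i]) \<and> pairseq (map g [0..<2*i])"
      using prepend by auto
    have "admissible z (TFin z1)"
      using g[of k] prefix[of k] len z assms by simp
    moreover have "ztr (z @ z1 @ map h [0..<2*j]) \<and> pairseq (map h [0..<2*j])" for j
      using g[of "k + j"] prefix[of "k + j"] len
      by (cases "j = 0") (simp_all add: pairseq_append assms)
    ultimately show "admissible z (TFin z1) \<and> admissible (z @ z1) \<tau>"
      using TInf z by (simp add: pairseq_append assms)
  next
    assume "admissible z (TFin z1) \<and> admissible (z @ z1) \<tau>"
    then have z1: "ztr (z @ z1)" "pairseq z"
      and h: "\<And>j. ztr (z @ z1 @ map h [0..<2*j]) \<and> pairseq (map h [0..<2*j])"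
      using TInf by auto
    have "ztr (z @ map g [0..<2*i]) \<and> pairseq (map g [0..<2*i])" for i
    proof (cases "i \<le> k")
      case True
      then show ?thesis
        using prefix[of i] ztr_appendD[of "z @ take (2*i) z1" "drop (2*i) z1"] z1(1)
          pairseq_take_drop[OF assms, of i] by simp
    next
      case False
      then show ?thesis
        using prefix[of i] h[of "i - k"] by (simp add: pairseq_append assms)
    qed
    then show "admissible z (tprepend z1 \<tau>)"
      using prepend z1(2) by simp
  qed
qed

lemma tsplit_sym_trace_lift:
  assumes "admissible z \<tau>" and "tsplit (sym_trace \<tau>) u \<sigma>"
  obtains z1 \<tau>' where "tsplit \<tau> z1 \<tau>'" "pairseq z1" "acts z1 = u"
proof (cases \<tau>)
  case (TFin zs)
  then obtain l where "acts zs = u @ l"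
    using assms(2) by (cases \<sigma>) (auto simp: tsplit_def)
  moreover have "pairseq zs"
    using assms(1) TFin by simp
  ultimately obtain z1 z2 where "zs = z1 @ z2" "pairseq z1" "acts z1 = u"
    using pairseq_split_acts by metis
  then show thesis
    using that[of z1 "TFin z2"] TFin by (simp add: tsplit_def)
next
  case (TInf g)
  let ?k = "length u"
  obtain h where h: "\<sigma> = TInf h"
    using assms(2) TInf by (cases \<sigma>) (auto simp: tsplit_def)
  have g_odd: "(\<lambda>i. act_of (g (2*i+1))) = (\<lambda>i. if i < ?k then u ! i else h (i - ?k))"
    using assms(2) TInf h by (simp add: tsplit_def)
  have prefix: "pairseq (map g [0..<2*?k])"
    using assms(1) TInf by simp
  have "acts (map g [0..<2*?k]) = map (\<lambda>j. act_of (g (2*j+1))) [0..<?k]"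
    by (rule acts_map_upt[OF prefix])
  also have "\<dots> = u"
    using g_odd by (auto intro: nth_equalityI simp: fun_eq_iff)
  finally show thesis
    using that[of "map g [0..<2*?k]" "TInf (\<lambda>i. g (i + 2*?k))"] prefix TInf
    by (simp add: tsplit_def fun_eq_iff)
qed

lemma ex_tsplit_sym_trace_iff:
  assumes "admissible z \<tau>"
  shows "(\<exists>u \<sigma>. tsplit (sym_trace \<tau>) u \<sigma> \<and> Q u \<sigma>) \<longleftrightarrow>
    (\<exists>z1 \<tau>'. tsplit \<tau> z1 \<tau>' \<and> pairseq z1 \<and> Q (acts z1) (sym_trace \<tau>'))"
proof
  assume "\<exists>u \<sigma>. tsplit (sym_trace \<tau>) u \<sigma> \<and> Q u \<sigma>"
  then obtain u \<sigma> where split: "tsplit (sym_trace \<tau>) u \<sigma>" and "Q u \<sigma>"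
    by blast
  obtain z1 \<tau>' where "tsplit \<tau> z1 \<tau>'" "pairseq z1" "acts z1 = u"
    using tsplit_sym_trace_lift[OF assms split] .
  moreover from this have "sym_trace \<tau>' = \<sigma>"
    using split sym_trace_tprepend tprepend_inj by (metis tsplit_def)
  ultimately show "\<exists>z1 \<tau>'. tsplit \<tau> z1 \<tau>' \<and> pairseq z1 \<and> Q (acts z1) (sym_trace \<tau>')"
    using \<open>Q u \<sigma>\<close> by blast
qed (use sym_trace_tprepend in \<open>auto simp: tsplit_def\<close>)

lemma tsat_FUntil_iff:
  assumes IH_a: "\<And>z \<tau>. admissible z \<tau> \<Longrightarrow> tsat wt e z \<tau> a \<longleftrightarrow> esat w e (acts z) (sym_trace \<tau>) a"
    and IH_b: "\<And>z \<tau>. admissible z \<tau> \<Longrightarrow> tsat wt e z \<tau> b \<longleftrightarrow> esat w e (acts z) (sym_trace \<tau>) b"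
    and I: "zero_inf I"
    and adm: "admissible z \<tau>"
  shows "tsat wt e z \<tau> (FUntil a I b) \<longleftrightarrow> esat w e (acts z) (sym_trace \<tau>) (FUntil a I b)"
proof -
  define Q where "Q u \<sigma> \<longleftrightarrow> u \<noteq> [] \<and> esat w e (acts z @ u) \<sigma> b \<and>
      (\<forall>u2 u3. u = u2 @ u3 \<and> u2 \<noteq> [] \<and> u3 \<noteq> [] \<longrightarrow> esat w e (acts z @ u2) (tprepend u3 \<sigma>) a)"
    for u \<sigma>
  have "z1 \<noteq> [] \<and> tsat wt e (z @ z1) \<tau>' b \<and> inI (time z1 - time z) I \<and>
      (\<forall>z2 z3. z1 = z2 @ z3 \<and> pairseq z2 \<and> z2 \<noteq> [] \<and> pairseq z3 \<and> z3 \<noteq> [] \<longrightarrow>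
         tsat wt e (z @ z2) (tprepend z3 \<tau>') a) \<longleftrightarrow> Q (acts z1) (sym_trace \<tau>')"
    if split: "tsplit \<tau> z1 \<tau>'" and z1: "pairseq z1" for z1 \<tau>'
  proof -
    have adm_z1: "admissible z (TFin z1)" "admissible (z @ z1) \<tau>'"
      using adm split admissible_tprepend[OF z1] by (auto simp: tsplit_def)
    have "inI (time z1 - time z) I" if "z1 \<noteq> []"
      using I time_mono[of z z1] adm_z1(1) z1 that by (auto simp: zero_inf_def)
    moreover have "tsat wt e (z @ z2) (tprepend z3 \<tau>') a \<longleftrightarrow>
        esat w e (acts z @ acts z2) (tprepend (acts z3) (sym_trace \<tau>')) a"
      if "z1 = z2 @ z3" "pairseq z2" "pairseq z3" for z2 z3
    proof -
      have "admissible z (tprepend z2 (tprepend z3 \<tau>'))"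
        using adm split that(1) by (simp add: tsplit_def tprepend_append)
      then have "admissible (z @ z2) (tprepend z3 \<tau>')"
        using admissible_tprepend[OF that(2)] by blast
      then show ?thesis
        using IH_a sym_trace_tprepend[OF that(3)] by simp
    qed
    ultimately show ?thesis
      unfolding Q_def all_pairseq_split_iff[OF z1]
      using IH_b[OF adm_z1(2)] acts_eq_Nil_iff[OF z1] by auto
  qed
  then have "tsat wt e z \<tau> (FUntil a I b) \<longleftrightarrow>
      (\<exists>z1 \<tau>'. tsplit \<tau> z1 \<tau>' \<and> pairseq z1 \<and> Q (acts z1) (sym_trace \<tau>'))"
    by (simp only: tsat.simps) blast
  also have "\<dots> \<longleftrightarrow> (\<exists>u \<sigma>. tsplit (sym_trace \<tau>) u \<sigma> \<and> Q u \<sigma>)"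
    using ex_tsplit_sym_trace_iff[OF adm] by blast
  also have "\<dots> \<longleftrightarrow> esat w e (acts z) (sym_trace \<tau>) (FUntil a I b)"
    by (simp add: Q_def)
  finally show ?thesis .
qed

section \<open>Transfer between a world and its time extension\<close>

definition well_sorted_env :: "(var \<Rightarrow> nm) \<Rightarrow> bool" where
  "well_sorted_env e \<longleftrightarrow> (\<forall>v. nsort (e v) = vsort v)"

lemma well_sorted_env_upd:
  "well_sorted_env e \<Longrightarrow> nsort n = vsort v \<Longrightarrow> well_sorted_env (e(v := n))"
  by (simp add: well_sorted_env_def)

lemma well_sorted_env0: "well_sorted_env env0"
  unfolding well_sorted_env_def env0_def by (auto split: srt.splits)

lemma esgp_estep: "estep w e z d p d' \<Longrightarrow> esgp d \<Longrightarrow> esgp d'"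
  by (induction rule: estep.induct) (auto simp: ttrue_def)

lemma esgp_tstep: "tstep w e z d p d' \<Longrightarrow> esgp d \<Longrightarrow> esgp d'"
  by (induction rule: tstep.induct) (auto simp: ttrue_def)

lemma treach_of_tinf_run:
  assumes "\<And>i. \<exists>t p. g (2*i) = Tm t \<and> g (2*i+1) = Ac p \<and> time (z @ map g [0..<2*i]) \<le> t \<and>
             tstep w e (z @ map g [0..<2*i] @ [Tm t]) (ds i) p (ds (Suc i))"
  shows "treach w e z (ds 0) (map g [0..<2*i]) (ds i)"
proof (induction i)
  case 0
  then show ?case by (simp add: treach.trefl)
next
  case (Suc i)
  obtain t p where "g (2*i) = Tm t" "g (2*i+1) = Ac p" "time (z @ map g [0..<2*i]) \<le> t"
    "tstep w e (z @ map g [0..<2*i] @ [Tm t]) (ds i) p (ds (Suc i))"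
    using assms by blast
  with treach.tstep_r[OF Suc] show ?case
    by simp
qed

locale time_extension =
  fixes w :: esg_world and wt :: tesg_world
  assumes esg_world: "is_esg_world w"
    and time_ext: "time_ext w wt"
begin

lemma teval_eq_eeval:
  "trm_esg t \<Longrightarrow> well_sorted_env e \<Longrightarrow> ztr z \<Longrightarrow>
     teval wt e z t = eeval w e (acts z) t \<and> nsort (eeval w e (acts z) t) \<noteq> SClk"
proof (induction t)
  case (TF f ts)
  let ?ns = "map (eeval w e (acts z)) ts"
  have args: "map (teval wt e z) ts = ?ns" and "\<forall>n \<in> set ?ns. nsort n \<noteq> SClk"
    using TF by (auto simp: list_all_iff)
  moreover have "fres f \<noteq> SClk"
    using TF.prems(1) by simp
  ultimately have "tf wt f ?ns z = ef w f ?ns (acts z)"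
    using time_ext TF.prems(3) unfolding time_ext_def symtr_def by blast
  moreover have "nsort (ef w f ?ns (acts z)) = fres f"
    using esg_world unfolding is_esg_world_def by blast
  ultimately show ?case
    using \<open>fres f \<noteq> SClk\<close> by (simp add: args)
qed (auto simp: well_sorted_env_def)

lemma tp_eq_ep:
  assumes "p \<noteq> Reset" "p \<noteq> Gd" "list_all trm_esg ts" "well_sorted_env e" "ztr z"
  shows "tp wt p (map (teval wt e z) ts) z = ep w p (map (eeval w e (acts z)) ts) (acts z)"
proof -
  let ?ns = "map (eeval w e (acts z)) ts"
  have args: "map (teval wt e z) ts = ?ns" and "\<forall>n \<in> set ?ns. nsort n \<noteq> SClk"
    using assms(3-5) teval_eq_eeval by (auto simp: list_all_iff)
  then have "tp wt p ?ns z = ep w p ?ns (acts z)"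
    using assms(1,2,5) time_ext unfolding time_ext_def symtr_def by blast
  then show ?thesis
    unfolding args .
qed

lemma tstat_iff_estat:
  "esgf a \<Longrightarrow> well_sorted_env e \<Longrightarrow> ztr z \<Longrightarrow> tstat wt e z a \<longleftrightarrow> estat w e (acts z) a"
proof (induction a arbitrary: e rule: fml.induct[where ?P2.0 = "\<lambda>_. True"])
  case (FPred p ts)
  then show ?case by (simp add: tp_eq_ep)
next
  case (FEq t1 t2)
  then show ?case by (simp add: teval_eq_eeval)
next
  case (FAll v a)
  then show ?case by (simp add: well_sorted_env_upd)
qed auto

lemma tfinal_iff_efinal:
  "esgp d \<Longrightarrow> well_sorted_env e \<Longrightarrow> ztr z \<Longrightarrow> tfinal wt e z d \<longleftrightarrow> efinal w e (acts z) d"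
  by (induction d rule: prog.induct[where ?P1.0 = "\<lambda>_. True"]) (auto simp: tstat_iff_estat)

lemma tstep_iff_estep:
  assumes "esgp d" "well_sorted_env e" "ztr z"
  shows "tstep wt e z d p d' \<longleftrightarrow> estep w e (acts z) d p d'"
proof
  have "tstep wt e z d p d' \<Longrightarrow> esgp d \<Longrightarrow> ztr z \<Longrightarrow> estep w e (acts z) d p d'"
    by (induction rule: tstep.induct)
      (use assms(2) in \<open>auto intro: estep.intros simp: teval_eq_eeval tfinal_iff_efinal\<close>)
  then show "tstep wt e z d p d' \<Longrightarrow> estep w e (acts z) d p d'"
    using assms(1,3) by blast
  have "estep w e u d p d' \<Longrightarrow> u = acts z \<Longrightarrow> esgp d \<Longrightarrow> ztr z \<Longrightarrow> tstep wt e z d p d'" for u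
    by (induction rule: estep.induct)
      (use assms(2) in \<open>auto intro: tstep.intros simp: teval_eq_eeval tfinal_iff_efinal\<close>)
  then show "estep w e (acts z) d p d' \<Longrightarrow> tstep wt e z d p d'"
    using assms(1,3) by blast
qed

lemma treach_imp_ereach:
  assumes "treach wt e z d zs d'" "esgp d" "well_sorted_env e" "ztr z" "pairseq z"
  shows "ereach w e (acts z) d (acts zs) d' \<and> admissible z (TFin zs) \<and> esgp d'"
  using assms(1)
proof (induction rule: treach.induct)
  case trefl
  then show ?case using assms(2-5) by (simp add: ereach.erefl)
next
  case (tstep_r zs d1 t p d2)
  then have reach: "ereach w e (acts z) d (acts zs) d1"
    and "ztr (z @ zs)" "pairseq (z @ zs)" "esgp d1"
    by (auto simp: pairseq_append assms(5))
  then have "ztr (z @ zs @ [Tm t])" "ztr (z @ zs @ [Tm t, Ac p])"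
    using ztr_snoc(1)[of "z @ zs" t] ztr_snoc(2)[of "z @ zs" t p] tstep_r.hyps(2) by simp_all
  with tstep_r.hyps(3) have "estep w e (acts z @ acts zs) d1 p d2"
    using tstep_iff_estep[OF \<open>esgp d1\<close> assms(3)] by simp
  then have "ereach w e (acts z) d (acts zs @ [p]) d2"
    by (rule ereach.estep_r[OF reach])
  moreover have "esgp d2"
    using esgp_tstep tstep_r.hyps(3) \<open>esgp d1\<close> by blast
  ultimately show ?case
    using tstep_r.IH \<open>ztr (z @ zs @ [Tm t, Ac p])\<close> by (simp add: pairseq_append)
qed

lemma ereach_imp_treach:
  assumes "ereach w e (acts z) d u d'" "esgp d" "well_sorted_env e" "ztr z" "pairseq z"
  shows "treach wt e z d (stamp (time z) u) d' \<and> esgp d'"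
proof -
  have "ereach w e v d u d' \<Longrightarrow> v = acts z \<Longrightarrow> treach wt e z d (stamp (time z) u) d' \<and> esgp d'" for v
  proof (induction rule: ereach.induct)
    case erefl
    then show ?case using assms(2) by (simp add: treach.trefl stamp_def)
  next
    case (estep_r u d1 p d2)
    let ?z = "z @ stamp (time z) u"
    have reach: "treach wt e z d (stamp (time z) u) d1" and "esgp d1"
      using estep_r by auto
    have "ztr ?z" "time ?z = time z" "pairseq ?z"
      using ztr_stamp[OF assms(4,5)] assms(5) by (auto simp: pairseq_append)
    then have "ztr (?z @ [Tm (time z)])"
      using ztr_snoc(1)[of ?z "time z"] by simp
    then have "tstep wt e (?z @ [Tm (time z)]) d1 p d2"
      using tstep_iff_estep[OF \<open>esgp d1\<close> assms(3)] estep_r by simp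
    then have "treach wt e z d (stamp (time z) u @ [Tm (time z), Ac p]) d2"
      using treach.tstep_r[OF reach] \<open>time ?z = time z\<close> by simp
    then show ?case
      using esgp_estep estep_r \<open>esgp d1\<close> by (auto simp: stamp_snoc)
  qed
  then show ?thesis
    using assms(1) by blast
qed

lemma tptr_TFinD:
  assumes "TFin zs \<in> tptr wt e z d" "esgp d" "well_sorted_env e" "ztr z" "pairseq z"
  shows "admissible z (TFin zs) \<and> TFin (acts zs) \<in> eptr w e (acts z) d"
proof -
  obtain d' where reach: "treach wt e z d zs d'" and final: "tfinal wt e (z @ zs) d'"
    using assms(1) by (auto simp: tptr_def)
  have "ereach w e (acts z) d (acts zs) d'" "admissible z (TFin zs)" "esgp d'"
    using treach_imp_ereach[OF reach assms(2-5)] by auto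
  moreover have "efinal w e (acts z @ acts zs) d'"
    using final tfinal_iff_efinal[OF \<open>esgp d'\<close> assms(3)] \<open>admissible z (TFin zs)\<close> by simp
  ultimately show ?thesis
    by (auto simp: eptr_def)
qed

lemma eptr_TFinD:
  assumes "TFin u \<in> eptr w e (acts z) d" "esgp d" "well_sorted_env e" "ztr z" "pairseq z"
  shows "TFin (stamp (time z) u) \<in> tptr wt e z d"
proof -
  obtain d' where reach: "ereach w e (acts z) d u d'" and final: "efinal w e (acts z @ u) d'"
    using assms(1) by (auto simp: eptr_def)
  have "treach wt e z d (stamp (time z) u) d'" "esgp d'"
    using ereach_imp_treach[OF reach assms(2-5)] by auto
  moreover have "tfinal wt e (z @ stamp (time z) u) d'"
    using final tfinal_iff_efinal[OF \<open>esgp d'\<close> assms(3)] ztr_stamp[OF assms(4,5)] by simp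
  ultimately show ?thesis
    by (auto simp: tptr_def)
qed

lemma tptr_TInfD:
  assumes "TInf g \<in> tptr wt e z d" "esgp d" "well_sorted_env e" "ztr z" "pairseq z"
  shows "admissible z (TInf g) \<and> sym_trace (TInf g) \<in> eptr w e (acts z) d"
proof -
  obtain ds where "ds 0 = d" and run: "\<And>i. \<exists>t p. g (2*i) = Tm t \<and> g (2*i+1) = Ac p \<and>
      time (z @ map g [0..<2*i]) \<le> t \<and>
      tstep wt e (z @ map g [0..<2*i] @ [Tm t]) (ds i) p (ds (Suc i)) \<and>
      \<not> tfinal wt e (z @ map g [0..<2*i]) (ds i)"
    using assms(1) by (auto simp: tptr_def)
  have prefix: "ereach w e (acts z) d (acts (map g [0..<2*i])) (ds i) \<and>
      admissible z (TFin (map g [0..<2*i])) \<and> esgp (ds i)" for i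
  proof -
    have "treach wt e z (ds 0) (map g [0..<2*i]) (ds i)"
      by (rule treach_of_tinf_run) (use run in blast)
    then show ?thesis
      using treach_imp_ereach assms(2-5) \<open>ds 0 = d\<close> by blast
  qed
  let ?f = "\<lambda>i. act_of (g (2*i+1))"
  have "estep w e (acts z @ map ?f [0..<i]) (ds i) (?f i) (ds (Suc i)) \<and>
      \<not> efinal w e (acts z @ map ?f [0..<i]) (ds i)" for i
  proof -
    let ?z = "z @ map g [0..<2*i]"
    obtain t p where "g (2*i+1) = Ac p" "time ?z \<le> t"
      and step: "tstep wt e (?z @ [Tm t]) (ds i) p (ds (Suc i))"
      and nonfinal: "\<not> tfinal wt e ?z (ds i)"
      using run[of i] by auto
    have "ztr ?z" "pairseq ?z" "pairseq (map g [0..<2*i])" "esgp (ds i)"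
      using prefix[of i] by (auto simp: pairseq_append assms(5))
    moreover have "ztr (?z @ [Tm t])"
      using ztr_snoc(1) calculation \<open>time ?z \<le> t\<close> by blast
    ultimately show ?thesis
      using step nonfinal \<open>g (2*i+1) = Ac p\<close> acts_map_upt
        tstep_iff_estep[OF _ assms(3)] tfinal_iff_efinal[OF _ assms(3)]
      by simp
  qed
  then show ?thesis
    using prefix assms(5) \<open>ds 0 = d\<close> by (auto simp: eptr_def)
qed

lemma eptr_TInfD:
  assumes "TInf f \<in> eptr w e (acts z) d" "esgp d" "well_sorted_env e" "ztr z" "pairseq z"
  shows "TInf (\<lambda>n. if even n then Tm (time z) else Ac (f (n div 2))) \<in> tptr wt e z d"
proof -
  obtain ds where "ds 0 = d"
    and run: "\<And>i. estep w e (acts z @ map f [0..<i]) (ds i) (f i) (ds (Suc i)) \<and>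
      \<not> efinal w e (acts z @ map f [0..<i]) (ds i)"
    using assms(1) by (auto simp: eptr_def)
  have esgp: "esgp (ds i)" for i
  proof (induction i)
    case (Suc i)
    then show ?case using esgp_estep run by blast
  qed (simp add: assms(2) \<open>ds 0 = d\<close>)
  define g where "g n = (if even n then Tm (time z) else Ac (f (n div 2)))" for n
  have "\<exists>t p. g (2*i) = Tm t \<and> g (2*i+1) = Ac p \<and> time (z @ map g [0..<2*i]) \<le> t \<and>
      tstep wt e (z @ map g [0..<2*i] @ [Tm t]) (ds i) p (ds (Suc i)) \<and>
      \<not> tfinal wt e (z @ map g [0..<2*i]) (ds i)" for i
  proof (intro exI conjI)
    let ?z = "z @ stamp (time z) (map f [0..<i])"
    have prefix: "map g [0..<2*i] = stamp (time z) (map f [0..<i])"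
      unfolding g_def by (rule map_upt_stamp)
    have "ztr ?z" "time ?z = time z" "pairseq ?z"
      using ztr_stamp[OF assms(4,5)] assms(5) by (auto simp: pairseq_append)
    moreover from this have "ztr (?z @ [Tm (time z)])"
      using ztr_snoc(1)[of ?z "time z"] by simp
    ultimately show "tstep wt e (z @ map g [0..<2*i] @ [Tm (time z)]) (ds i) (f i) (ds (Suc i))"
      and "\<not> tfinal wt e (z @ map g [0..<2*i]) (ds i)"
      and "time (z @ map g [0..<2*i]) \<le> time z"
      using run[of i] prefix tstep_iff_estep[OF esgp assms(3)] tfinal_iff_efinal[OF esgp assms(3)]
      by simp_all
  qed (simp_all add: g_def)
  then show ?thesis
    using \<open>ds 0 = d\<close> unfolding g_def tptr_def by blast
qed

lemma tptr_admissible: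
  "\<tau> \<in> tptr wt e z d \<Longrightarrow> esgp d \<Longrightarrow> well_sorted_env e \<Longrightarrow> ztr z \<Longrightarrow> pairseq z \<Longrightarrow>
     admissible z \<tau>"
  using tptr_TFinD tptr_TInfD by (cases \<tau>) blast+

lemma tfin_admissible:
  "zs \<in> tfin wt e z d \<Longrightarrow> esgp d \<Longrightarrow> well_sorted_env e \<Longrightarrow> ztr z \<Longrightarrow> pairseq z \<Longrightarrow>
     admissible z (TFin zs)"
  unfolding tfin_def by (rule tptr_admissible) simp_all

lemma sym_trace_tptr:
  assumes "esgp d" "well_sorted_env e" "ztr z" "pairseq z"
  shows "sym_trace ` tptr wt e z d = eptr w e (acts z) d"
proof (intro equalityI subsetI)
  fix \<sigma> assume "\<sigma> \<in> sym_trace ` tptr wt e z d"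
  then obtain \<tau> where "\<tau> \<in> tptr wt e z d" "\<sigma> = sym_trace \<tau>"
    by blast
  then show "\<sigma> \<in> eptr w e (acts z) d"
    using tptr_TFinD[OF _ assms] tptr_TInfD[OF _ assms] sym_trace.simps by (cases \<tau>) metis+
next
  fix \<sigma> assume "\<sigma> \<in> eptr w e (acts z) d"
  then show "\<sigma> \<in> sym_trace ` tptr wt e z d"
  proof (cases \<sigma>)
    case (TFin u)
    then have "\<sigma> = sym_trace (TFin (stamp (time z) u))"
      by simp
    then show ?thesis
      using eptr_TFinD[OF _ assms] \<open>\<sigma> \<in> eptr w e (acts z) d\<close> TFin by (intro image_eqI) auto
  next
    case (TInf f)
    then have "\<sigma> = sym_trace (TInf (\<lambda>n. if even n then Tm (time z) else Ac (f (n div 2))))"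
      by (simp add: fun_eq_iff)
    then show ?thesis
      using eptr_TInfD[OF _ assms] \<open>\<sigma> \<in> eptr w e (acts z) d\<close> TInf by (intro image_eqI) auto
  qed
qed

lemma acts_tfin:
  assumes "esgp d" "well_sorted_env e" "ztr z" "pairseq z"
  shows "acts ` tfin wt e z d = efin w e (acts z) d"
proof (intro equalityI subsetI)
  fix u assume "u \<in> acts ` tfin wt e z d"
  then show "u \<in> efin w e (acts z) d"
    using tptr_TFinD[OF _ assms] unfolding tfin_def efin_def by blast
next
  fix u assume "u \<in> efin w e (acts z) d"
  then have "stamp (time z) u \<in> tfin wt e z d"
    using eptr_TFinD[OF _ assms] unfolding tfin_def efin_def by blast
  then show "u \<in> acts ` tfin wt e z d"
    by (metis acts_stamp image_eqI)
qed

lemma tsat_iff_esat: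
  "esgf \<phi> \<Longrightarrow> well_sorted_env e \<Longrightarrow> admissible z \<tau> \<Longrightarrow>
     tsat wt e z \<tau> \<phi> \<longleftrightarrow> esat w e (acts z) (sym_trace \<tau>) \<phi>"
proof (induction \<phi> arbitrary: e z \<tau> rule: fml.induct[where ?P2.0 = "\<lambda>_. True"])
  case (FPred p ts)
  then show ?case using admissibleD by (simp add: tp_eq_ep)
next
  case (FEq t1 t2)
  then show ?case using admissibleD by (simp add: teval_eq_eeval)
next
  case (FAll v a)
  then show ?case by (simp add: well_sorted_env_upd)
next
  case (FBox a)
  have z: "ztr z" "pairseq z"
    using admissibleD[OF FBox.prems(3)] by auto
  have "tsat wt e z \<tau> (FBox a) \<longleftrightarrow>
      (\<forall>z'. admissible z (TFin z') \<longrightarrow> esat w e (acts z @ acts z') (TFin []) a)"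
    using FBox z by (auto simp: pairseq_append)
  also have "\<dots> \<longleftrightarrow> (\<forall>u. esat w e (acts z @ u) (TFin []) a)"
    using ztr_stamp[OF z] z by (metis acts_stamp admissible.simps(1) pairseq_stamp)
  finally show ?case
    by simp
next
  case (FAfter d a)
  then have d: "esgp d" and z: "ztr z" "pairseq z"
    using admissibleD by auto
  have "tsat wt e (z @ zs) (TFin []) a \<longleftrightarrow> esat w e (acts z @ acts zs) (TFin []) a"
    if "zs \<in> tfin wt e z d" for zs
    using FAfter tfin_admissible[OF that d _ z] by (simp add: pairseq_append)
  then show ?case
    by (auto simp flip: acts_tfin[OF d FAfter.prems(2) z])
next
  case (FEvery d a)
  then have d: "esgp d" and z: "ztr z" "pairseq z"
    using admissibleD by auto
  have "tsat wt e z \<tau>' a \<longleftrightarrow> esat w e (acts z) (sym_trace \<tau>') a" if "\<tau>' \<in> tptr wt e z d" for \<tau>'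
    using FEvery tptr_admissible[OF that d _ z] by simp
  then show ?case
    by (auto simp flip: sym_trace_tptr[OF d FEvery.prems(2) z])
next
  case (FEveryFin d a)
  then have d: "esgp d" and z: "ztr z" "pairseq z"
    using admissibleD by auto
  have "tsat wt e z (TFin zs) a \<longleftrightarrow> esat w e (acts z) (TFin (acts zs)) a"
    if "zs \<in> tfin wt e z d" for zs
    using FEveryFin tfin_admissible[OF that d _ z] by simp
  then show ?case
    by (auto simp flip: acts_tfin[OF d FEveryFin.prems(2) z])
next
  case (FUntil a I b)
  then show ?case
    by (intro tsat_FUntil_iff) auto
qed auto

end

theorem mainTheorem3:
  assumes "is_esg_world w"
      and "time_ext w wt"
      and "esg_sentence \<alpha>"
      and "ztr zt" and "pairseq zt"
  shows "esg_models w (symtr zt) \<alpha> \<longleftrightarrow> tesg_models wt zt \<alpha>"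
proof -
  interpret time_extension w wt
    using assms(1,2) by unfold_locales
  have "esgf \<alpha>"
    using assms(3) by (simp add: esg_sentence_def)
  moreover have "admissible zt (TFin [])"
    using assms(4,5) by simp
  ultimately show ?thesis
    using tsat_iff_esat[OF _ well_sorted_env0]
    by (simp add: esg_models_def tesg_models_def symtr_def)
qed

end
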